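(* Let $p>2$ and fix $0<z<\big(\frac1{p-1}\big)^{1/(p-2)}$. The function $\ell:(0,z)\to\mathbb R^+$, $\ell(w)=\frac1{\sqrt2}\int_w^z\frac{dt}{\sqrt{f(t)-f(w)}}$, is strictly decreasing.
   Context: $f(x)=\frac12x^2-\frac1p|x|^p$. *)

theory Defs
  imports "HOL-Analysis.Analysis"
begin

definition fpot :: "real \<Rightarrow> real \<Rightarrow> real" where
  "fpot p x = x\<^sup>2 / 2 - \<bar>x\<bar> powr p / p"

text \<open>The integrand is singular (but integrable) at t = w; the integral is the
  Henstock-Kurzweil integral, which for this nonnegative integrand coincides
  with the (absolutely convergent) improper/Lebesgue integral.\<close>
definition ell :: "real \<Rightarrow> real \<Rightarrow> real \<Rightarrow> real" where
  "ell p z w = (1 / sqrt 2) * integral {w..z} (\<lambda>t. 1 / sqrt (fpot p t - fpot p w))"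

end

theory Submission
  imports Defs
begin

text \<open>On \<open>(0, (1/(p-1))^(1/(p-2)))\<close> the potential has positive, nondecreasing
  derivative \<open>f'(x) = x - x^(p-1)\<close>. For such an \<open>f\<close> the increments \<open>f(t+d) - f(t)\<close> grow with \<open>t\<close>,
  so after substituting \<open>t = s + d\<close> the integrand of \<open>\<ell>(w + d)\<close> is dominated by that of
  \<open>\<ell>(w)\<close> on \<open>[w, z - d]\<close>; the remaining piece \<open>[z - d, z]\<close> of the integral for \<open>\<ell>(w)\<close> is
  positive. The singularity at \<open>t = w\<close> is integrable because \<open>f(t) - f(w) \<ge> f'(w) (t - w)\<close>.\<close>

lemma inverse_sqrt_diff_integrable:
  fixes w b :: real
  assumes "w \<le> b"
  shows "(\<lambda>t. 1 / sqrt (t - w)) integrable_on {w..b}"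
proof -
  have "((\<lambda>t. 1 / sqrt (t - w)) has_integral (2 * sqrt (b - w) - 2 * sqrt (w - w))) {w..b}"
  proof (rule fundamental_theorem_of_calculus_interior)
    show "continuous_on {w..b} (\<lambda>t. 2 * sqrt (t - w))"
      by (intro continuous_intros)
    fix x assume "x \<in> {w<..<b}"
    then show "((\<lambda>t. 2 * sqrt (t - w)) has_vector_derivative 1 / sqrt (x - w)) (at x)"
      unfolding has_real_derivative_iff_has_vector_derivative[symmetric]
      by (auto intro!: derivative_eq_intros simp: field_simps)
  qed (use assms in auto)
  then show ?thesis
    by blast
qed

locale positive_monotone_derivative =
  fixes f f' :: "real \<Rightarrow> real" and a b :: real
  assumes has_deriv: "\<And>x. x \<in> {a..b} \<Longrightarrow> (f has_real_derivative f' x) (at x)"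
    and deriv_pos: "\<And>x. x \<in> {a..b} \<Longrightarrow> 0 < f' x"
    and deriv_mono: "\<And>x y. x \<in> {a..b} \<Longrightarrow> y \<in> {a..b} \<Longrightarrow> x \<le> y \<Longrightarrow> f' x \<le> f' y"
begin

lemma f_strict_mono:
  assumes "a \<le> x" "x < y" "y \<le> b"
  shows "f x < f y"
  using assms by (intro DERIV_pos_imp_increasing[of x y f]) (auto intro!: exI has_deriv deriv_pos)

lemma increment_mono:
  assumes "a \<le> w" "w \<le> t" "0 \<le> d" "t + d \<le> b"
  shows "f (w + d) - f w \<le> f (t + d) - f t"
proof -
  have "(\<lambda>x. f (x + d) - f x) w \<le> (\<lambda>x. f (x + d) - f x) t"
  proof (rule DERIV_nonneg_imp_nondecreasing[OF \<open>w \<le> t\<close>])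
    fix x assume "w \<le> x" "x \<le> t"
    with assms show "\<exists>y. ((\<lambda>x. f (x + d) - f x) has_real_derivative y) (at x) \<and> 0 \<le> y"
      by (intro exI[of _ "f' (x + d) - f' x"])
         (auto intro!: derivative_eq_intros has_deriv[THEN DERIV_chain2] has_deriv deriv_mono)
  qed
  then show ?thesis
    by simp
qed

lemma above_tangent:
  assumes "a \<le> w" "w \<le> t" "t \<le> b"
  shows "f' w * (t - w) \<le> f t - f w"
proof -
  have "(\<lambda>x. f x - f' w * x) w \<le> (\<lambda>x. f x - f' w * x) t"
  proof (rule DERIV_nonneg_imp_nondecreasing[OF \<open>w \<le> t\<close>])
    fix x assume "w \<le> x" "x \<le> t"
    with assms show "\<exists>y. ((\<lambda>x. f x - f' w * x) has_real_derivative y) (at x) \<and> 0 \<le> y"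
      by (intro exI[of _ "f' x - f' w"]) (auto intro!: derivative_eq_intros has_deriv deriv_mono)
  qed
  then show ?thesis
    by (simp add: algebra_simps)
qed

lemma inverse_sqrt_increment_integrable:
  assumes "a \<le> w" "w \<le> b"
  shows "(\<lambda>t. 1 / sqrt (f t - f w)) integrable_on {w..b}"
proof -
  define c where "c = f' w"
  have "c > 0"
    using assms deriv_pos unfolding c_def by simp
  have dominating: "(\<lambda>t. 1 / sqrt c * (1 / sqrt (t - w))) integrable_on {w<..<b}"
    unfolding integrable_on_Icc_iff_Ioo[symmetric]
    by (intro integrable_on_mult_right inverse_sqrt_diff_integrable assms)
  have "continuous_on {w<..<b} (\<lambda>t. 1 / sqrt (f t - f w))"
  proof (rule continuous_at_imp_continuous_on, rule ballI)
    fix t assume t: "t \<in> {w<..<b}"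
    then have "isCont f t" and "f t - f w > 0"
      using assms by (auto intro!: DERIV_isCont[OF has_deriv] f_strict_mono)
    then show "isCont (\<lambda>t. 1 / sqrt (f t - f w)) t"
      by (auto intro!: continuous_intros)
  qed
  then have "(\<lambda>t. 1 / sqrt (f t - f w)) integrable_on {w<..<b}"
  proof (rule measurable_bounded_by_integrable_imp_integrable_real[OF
        continuous_imp_measurable_on_sets_lebesgue dominating])
    fix t assume t: "t \<in> {w<..<b}"
    then have "0 < c * (t - w)" "c * (t - w) \<le> f t - f w"
      using \<open>c > 0\<close> assms above_tangent unfolding c_def by auto
    then show "\<bar>1 / sqrt (f t - f w)\<bar> \<le> 1 / sqrt c * (1 / sqrt (t - w))"
      by (simp add: frac_le real_sqrt_mult[symmetric])
  qed auto
  then show ?thesis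
    by (simp add: integrable_on_Icc_iff_Ioo)
qed

lemma inverse_sqrt_increment_shift_le:
  assumes "a \<le> w" "w \<le> s" "0 \<le> d" "s + d \<le> b"
  shows "1 / sqrt (f (s + d) - f (w + d)) \<le> 1 / sqrt (f s - f w)"
proof (cases "s = w")
  case False
  with assms have "0 < f s - f w"
    using f_strict_mono[of w s] by simp
  moreover have "f s - f w \<le> f (s + d) - f (w + d)"
    using increment_mono[of w s d] assms by simp
  ultimately show ?thesis
    by (simp add: frac_le)
qed simp \<comment> \<open>at \<open>s = w\<close> both sides are the junk value \<open>1 / sqrt 0 = 0\<close>\<close>

lemma integral_inverse_sqrt_increment_pos:
  assumes "a \<le> w" "w < c" "c < b"
  shows "0 < integral {c..b} (\<lambda>t. 1 / sqrt (f t - f w))"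
proof -
  define K where "K = 1 / sqrt (f b - f w)"
  have "0 < K"
    using assms f_strict_mono[of w b] unfolding K_def by simp
  have "0 < (b - c) * K"
    using assms \<open>0 < K\<close> by simp
  also have "\<dots> = integral {c..b} (\<lambda>t. K)"
    using assms by simp
  also have "\<dots> \<le> integral {c..b} (\<lambda>t. 1 / sqrt (f t - f w))"
  proof (rule integral_le)
    show "(\<lambda>t. 1 / sqrt (f t - f w)) integrable_on {c..b}"
      by (rule integrable_subinterval_real[OF inverse_sqrt_increment_integrable[of w]])
         (use assms in auto)
    fix t assume "t \<in> {c..b}"
    then have "0 < f t - f w" "f t \<le> f b"
      using assms f_strict_mono[of w t] f_strict_mono[of t b] by force+
    then show "K \<le> 1 / sqrt (f t - f w)"
      by (simp add: K_def frac_le)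
  qed (rule integrable_const_ivl)
  finally show ?thesis .
qed

lemma integral_inverse_sqrt_increment_strict_decreasing:
  assumes "a \<le> w1" "w1 < w2" "w2 < b"
  shows "integral {w2..b} (\<lambda>t. 1 / sqrt (f t - f w2))
       < integral {w1..b} (\<lambda>t. 1 / sqrt (f t - f w1))"
proof -
  define g where "g w t = 1 / sqrt (f t - f w)" for w t
  define d where "d = w2 - w1"
  have d: "d > 0" "w1 + d = w2"
    using assms by (auto simp: d_def)
  have int1: "g w1 integrable_on {w1..b}" and int2: "g w2 integrable_on {w2..b}"
    using assms inverse_sqrt_increment_integrable unfolding g_def by auto
  have shift: "((\<lambda>s. g w2 (s + d)) has_integral integral {w2..b} (g w2)) {w1..b - d}"
    using has_integral_shift_Icc_real[of "g w2" d _ w1 "b - d"] integrable_integral[OF int2] d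
    by (simp add: comp_def add.commute)
  have "integral {w2..b} (g w2) \<le> integral {w1..b - d} (g w1)"
  proof (rule has_integral_le[OF shift integrable_integral])
    show "g w1 integrable_on {w1..b - d}"
      using int1 by (rule integrable_subinterval_real) (use d in auto)
    fix s assume "s \<in> {w1..b - d}"
    then show "g w2 (s + d) \<le> g w1 s"
      using inverse_sqrt_increment_shift_le[of w1 s d] assms d unfolding g_def by auto
  qed
  moreover have "0 < integral {b - d..b} (g w1)"
    using integral_inverse_sqrt_increment_pos[of w1 "b - d"] assms d unfolding g_def by auto
  moreover have "integral {w1..b - d} (g w1) + integral {b - d..b} (g w1) = integral {w1..b} (g w1)"
    using assms d by (intro Henstock_Kurzweil_Integration.integral_combine[OF _ _ int1]) auto
  ultimately show ?thesis
    unfolding g_def by linarith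
qed

end

lemma powr_less_of_less_root:
  fixes q c x :: real
  assumes "0 < q" "0 < c" "0 \<le> x" "x < c powr (1 / q)"
  shows "x powr q < c"
proof -
  have "x powr q < (c powr (1 / q)) powr q"
    using assms by (intro powr_less_mono2) auto
  also have "\<dots> = c"
    using assms by (simp add: powr_powr)
  finally show ?thesis .
qed

lemma fpot_has_real_derivative:
  fixes p x :: real
  assumes "p \<noteq> 0" "0 < x"
  shows "(fpot p has_real_derivative (x - x powr (p - 1))) (at x)"
proof -
  have "((\<lambda>y. y\<^sup>2 / 2 - y powr p / p) has_real_derivative (x - x powr (p - 1))) (at x)"
    using assms
    by (auto intro!: derivative_eq_intros has_real_derivative_powr[THEN DERIV_chain2])
  then show ?thesis
    by (rule has_field_derivative_transform_within_open[of _ _ _ "{0<..}"])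
       (use assms in \<open>auto simp: fpot_def\<close>)
qed

lemma fpot_positive_monotone_derivative:
  fixes p a b :: real
  assumes "p > 2" "0 < a" "b < (1 / (p - 1)) powr (1 / (p - 2))"
  shows "positive_monotone_derivative (fpot p) (\<lambda>x. x - x powr (p - 1)) a b"
proof
  have small: "x powr (p - 2) < 1 / (p - 1)" if "x \<in> {a..b}" for x
    using assms that by (intro powr_less_of_less_root) auto
  fix x assume x: "x \<in> {a..b}"
  then show "(fpot p has_real_derivative x - x powr (p - 1)) (at x)"
    using assms by (auto intro: fpot_has_real_derivative)
  have "x powr (p - 1) = x powr (p - 2) * x"
    using powr_add[of x "p - 2" 1] assms x by simp
  also have "\<dots> < x"
  proof -
    have "1 / (p - 1) < 1"
      using assms by simp
    with small[OF x] have "x powr (p - 2) < 1"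
      by linarith
    then show ?thesis
      using x assms by simp
  qed
  finally show "0 < x - x powr (p - 1)"
    by simp
  fix y assume y: "y \<in> {a..b}" "x \<le> y"
  show "x - x powr (p - 1) \<le> y - y powr (p - 1)"
  proof (rule DERIV_nonneg_imp_nondecreasing[OF \<open>x \<le> y\<close>])
    fix u assume "x \<le> u" "u \<le> y"
    with x y have u: "u \<in> {a..b}" "0 < u"
      using assms by auto
    show "\<exists>D. ((\<lambda>x. x - x powr (p - 1)) has_real_derivative D) (at u) \<and> 0 \<le> D"
      using small[OF u(1)] u assms
      by (intro exI[of _ "1 - (p - 1) * u powr (p - 2)"])
         (auto intro!: derivative_eq_intros simp: field_simps)
  qed
qed

theorem lemma3p2:
  fixes p z :: real
  assumes "p > 2"
    and "0 < z"
    and "z < (1 / (p - 1)) powr (1 / (p - 2))"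
  shows "\<forall>w1 w2. 0 < w1 \<and> w1 < w2 \<and> w2 < z \<longrightarrow> ell p z w2 < ell p z w1"
proof (intro allI impI)
  fix w1 w2 :: real
  assume w: "0 < w1 \<and> w1 < w2 \<and> w2 < z"
  then interpret positive_monotone_derivative "fpot p" "\<lambda>x. x - x powr (p - 1)" w1 z
    using assms by (intro fpot_positive_monotone_derivative) auto
  have "integral {w2..z} (\<lambda>t. 1 / sqrt (fpot p t - fpot p w2))
      < integral {w1..z} (\<lambda>t. 1 / sqrt (fpot p t - fpot p w1))"
    using w by (intro integral_inverse_sqrt_increment_strict_decreasing) auto
  then show "ell p z w2 < ell p z w1"
    unfolding ell_def by (simp add: divide_strict_right_mono)
qed

end
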